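(* Let $\theta<\kappa$ be a regular cardinal and let $I$ be a weakly $\theta$-saturated, $\theta$-indecomposable ideal on the cardinal $\kappa$. If $\delta$ is an ordinal of cofinality $\theta$, then every function $f:\kappa\to\delta$ is bounded below $\delta$ almost everywhere: there is $\beta<\delta$ with $\{\alpha<\kappa:f(\alpha)\geq\beta\}\in I$.
   Context: By an ideal on a cardinal $\kappa$ we mean a proper ideal on $\kappa$ containing all bounded subsets of $\kappa$. $I$ is weakly $\theta$-saturated if there is no partition of $\kappa$ into $\theta$ pairwise disjoint sets not in $I$. $I$ is $\theta$-indecomposable if whenever $\langle A_i:i<\theta\rangle$ are subsets of $\kappa$ with $\bigcup_{i<\theta}A_i\notin I$, there is $w\subseteq\theta$ with $|w|<\theta$ and $\bigcup_{i\in w}A_i\notin I$. *)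

theory Defs
  imports Main
begin

unbundle cardinal_syntax

(* A cardinal kappa is a cardinal order k (Card_order k) with carrier Field k.
   Ordinals are well-orders (non-strict relations). *)

definition bounded_in :: "'a rel \<Rightarrow> 'a set \<Rightarrow> bool" where
  "bounded_in k A \<longleftrightarrow> A \<subseteq> Field k \<and>
     (\<exists>\<gamma>\<in>Field k. \<forall>\<alpha>\<in>A. (\<alpha>, \<gamma>) \<in> k \<and> \<alpha> \<noteq> \<gamma>)"

definition is_ideal_on :: "'a rel \<Rightarrow> 'a set set \<Rightarrow> bool" where
  "is_ideal_on k I \<longleftrightarrow>
     I \<subseteq> Pow (Field k) \<and>
     Field k \<notin> I \<and>
     (\<forall>A\<in>I. \<forall>B. B \<subseteq> A \<longrightarrow> B \<in> I) \<and>
     (\<forall>A\<in>I. \<forall>B\<in>I. A \<union> B \<in> I) \<and>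
     (\<forall>A. bounded_in k A \<longrightarrow> A \<in> I)"

definition weakly_saturated :: "'a rel \<Rightarrow> 'c rel \<Rightarrow> 'a set set \<Rightarrow> bool" where
  "weakly_saturated k t I \<longleftrightarrow>
     \<not> (\<exists>A :: 'c \<Rightarrow> 'a set.
          (\<Union>i\<in>Field t. A i) = Field k \<and>
          (\<forall>i\<in>Field t. \<forall>j\<in>Field t. i \<noteq> j \<longrightarrow> A i \<inter> A j = {}) \<and>
          (\<forall>i\<in>Field t. A i \<notin> I))"

definition indecomposable :: "'a rel \<Rightarrow> 'c rel \<Rightarrow> 'a set set \<Rightarrow> bool" where
  "indecomposable k t I \<longleftrightarrow>
     (\<forall>A :: 'c \<Rightarrow> 'a set.
        (\<forall>i\<in>Field t. A i \<subseteq> Field k) \<longrightarrow> (\<Union>i\<in>Field t. A i) \<notin> I \<longrightarrow>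
        (\<exists>w \<subseteq> Field t. |w| <o |Field t| \<and> (\<Union>i\<in>w. A i) \<notin> I))"

definition cofinal_in :: "'d set \<Rightarrow> 'd rel \<Rightarrow> bool" where
  "cofinal_in C d \<longleftrightarrow> C \<subseteq> Field d \<and> (\<forall>x\<in>Field d. \<exists>y\<in>C. (x, y) \<in> d)"

definition has_cofinality :: "'d rel \<Rightarrow> 'c rel \<Rightarrow> bool" where
  "has_cofinality d t \<longleftrightarrow>
     (\<exists>C. cofinal_in C d \<and> |C| =o |Field t| ) \<and>
     (\<forall>C. cofinal_in C d \<longrightarrow> |Field t| \<le>o |C| )"

end

theory Submission
  imports Defs
begin

(*
  Suppose every tail {\<alpha>. \<beta> \<le> f \<alpha>} is I-positive. Cover a tail by the preimages of the initial
  segments below the points of a cofinal set of size \<theta>: by indecomposability fewer than \<theta> of them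
  already have positive union, and these points are bounded below \<delta> because cf \<delta> = \<theta>. So every \<beta>
  has some g \<beta> > \<beta> for which the preimage of [\<beta>, g \<beta>) is positive. A maximal set S such that each interval
  [\<beta>, g \<beta>), \<beta> \<in> S, ends at or below every larger element of S has size at least \<theta>, since
  otherwise it could be extended by a point above all g \<beta>, \<beta> \<in> S. The preimages of these
  intervals are \<theta> pairwise disjoint positive sets, contradicting weak saturation.
*)

lemma Partial_order_le_less_trans:
  assumes "Partial_order d" and "(a, b) \<in> d" and "(b, c) \<in> d" and "b \<noteq> c"
  shows "(a, c) \<in> d \<and> a \<noteq> c"
  using assms unfolding partial_order_on_def preorder_on_def by (metis antisymD transD)

lemma not_cofinal_AboveS_nonempty:
  assumes "Linear_order d" and "B \<subseteq> Field d" and "\<not> cofinal_in B d"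
  shows "AboveS d B \<noteq> {}"
proof -
  obtain x where x: "x \<in> Field d" "\<forall>y\<in>B. (x, y) \<notin> d"
    using assms(2,3) unfolding cofinal_in_def by blast
  have "(y, x) \<in> d - Id" if "y \<in> B" for y
    using Linear_order_in_diff_Id[OF assms(1) x(1)] x(2) that assms(2) by blast
  then have "x \<in> AboveS d B" using x(1) unfolding AboveS_def by blast
  then show ?thesis by blast
qed

lemma has_cofinality_small_AboveS_nonempty:
  assumes "Linear_order d" and "has_cofinality d t"
    and "B \<subseteq> Field d" and "|B| <o |Field t|"
  shows "AboveS d B \<noteq> {}"
proof -
  have "\<not> cofinal_in B d"
    using assms(2,4) not_ordLess_ordLeq unfolding has_cofinality_def by blast
  then show ?thesis using not_cofinal_AboveS_nonempty assms(1,3) by blast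
qed

definition spaced_by :: "'d rel \<Rightarrow> ('d \<Rightarrow> 'd) \<Rightarrow> 'd set \<Rightarrow> bool" where
  "spaced_by d g S \<longleftrightarrow> S \<subseteq> Field d \<and> (\<forall>a\<in>S. \<forall>b\<in>S. (a, b) \<in> d - Id \<longrightarrow> (g a, b) \<in> d)"

lemma spaced_by_Union_chain:
  assumes "Ch \<in> chains {S. spaced_by d g S}"
  shows "spaced_by d g (\<Union>Ch)"
  unfolding spaced_by_def
proof (intro conjI ballI impI)
  show "\<Union>Ch \<subseteq> Field d" using assms unfolding chains_def spaced_by_def by blast
next
  fix a b assume "a \<in> \<Union>Ch" "b \<in> \<Union>Ch" "(a, b) \<in> d - Id"
  moreover have "chain\<^sub>\<subseteq> Ch" using assms unfolding chains_def by blast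
  ultimately obtain S where "S \<in> Ch" "a \<in> S" "b \<in> S"
    unfolding chain_subset_def by blast
  then show "(g a, b) \<in> d"
    using \<open>(a, b) \<in> d - Id\<close> assms unfolding chains_def spaced_by_def by blast
qed

lemma spaced_by_insert_AboveS:
  assumes "Partial_order d" and "spaced_by d g S" and "\<forall>a\<in>S. (a, g a) \<in> d"
    and "x \<in> AboveS d (g ` S)"
  shows "spaced_by d g (insert x S)"
proof -
  have x: "x \<in> Field d" "\<And>a. a \<in> S \<Longrightarrow> (g a, x) \<in> d \<and> g a \<noteq> x"
    using assms(4) unfolding AboveS_def by auto
  have "(g x, b) \<in> d" if "b \<in> S" "(x, b) \<in> d" for b
  proof -
    have "(b, x) \<in> d" "g b \<noteq> x"
      using assms(1,3) x(2)[OF that(1)] that(1) unfolding partial_order_on_def preorder_on_def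
      by (auto dest: transD)
    then show ?thesis
      using assms(1) x(2)[OF that(1)] that unfolding partial_order_on_def
      by (metis antisymD)
  qed
  then show ?thesis
    using assms(2) x unfolding spaced_by_def by auto
qed

lemma exists_large_spaced_by:
  assumes "Linear_order d" and g: "\<forall>b\<in>Field d. (b, g b) \<in> d"
    and bounded: "\<forall>B \<subseteq> Field d. |B| <o |T| \<longrightarrow> AboveS d B \<noteq> {}"
  shows "\<exists>S. spaced_by d g S \<and> |T| \<le>o |S|"
proof -
  have "\<forall>Ch\<in>chains {S. spaced_by d g S}. \<Union>Ch \<in> {S. spaced_by d g S}"
    using spaced_by_Union_chain by blast
  then obtain S where S: "spaced_by d g S"
    and maximal: "\<And>S'. spaced_by d g S' \<Longrightarrow> S \<subseteq> S' \<Longrightarrow> S' = S"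
    using Zorn_Lemma[of "{S. spaced_by d g S}"] by auto
  have SF: "S \<subseteq> Field d" using S unfolding spaced_by_def by blast
  have "|T| \<le>o |S|"
  proof (rule ccontr)
    assume "\<not> |T| \<le>o |S|"
    then have "|S| <o |T|"
      using ordLess_or_ordLeq[OF card_of_Well_order card_of_Well_order] by blast
    then have "|g ` S| <o |T|"
      using ordLeq_ordLess_trans[OF card_of_image] by blast
    moreover have "g ` S \<subseteq> Field d" using g SF by (auto simp: Field_def)
    ultimately obtain x where x: "x \<in> AboveS d (g ` S)" using bounded by blast
    have "spaced_by d g (insert x S)"
      using spaced_by_insert_AboveS[OF _ S _ x] assms(1) g SF
      unfolding linear_order_on_def by blast
    then have "x \<in> S" using maximal by blast
    then have "(x, g x) \<in> d" "(g x, x) \<in> d" "g x \<noteq> x"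
      using x g SF unfolding AboveS_def by auto
    then show False
      using assms(1) unfolding linear_order_on_def partial_order_on_def by (metis antisymD)
  qed
  then show ?thesis using S by blast
qed

lemma spaced_by_intervals_disjoint:
  assumes "Linear_order d" and "spaced_by d g S"
    and "a \<in> S" and "b \<in> S" and "a \<noteq> b"
  shows "(above d a \<inter> underS d (g a)) \<inter> (above d b \<inter> underS d (g b)) = {}"
proof -
  have po: "trans d" "antisym d"
    using assms(1) unfolding linear_order_on_def partial_order_on_def preorder_on_def by auto
  have ordered: "(above d a \<inter> underS d (g a)) \<inter> above d b = {}"
    if "a \<in> S" "b \<in> S" "(a, b) \<in> d - Id" for a b
  proof -
    have "(g a, b) \<in> d" using assms(2) that unfolding spaced_by_def by blast
    then show ?thesis
      using po unfolding above_def underS_def by (auto dest: transD antisymD)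
  qed
  have "(a, b) \<in> d - Id \<or> (b, a) \<in> d - Id"
    using assms(1-5) unfolding spaced_by_def linear_order_on_def total_on_def by blast
  then show ?thesis using ordered assms(3,4) by blast
qed

definition interval_preimage :: "'a rel \<Rightarrow> ('a \<Rightarrow> 'd) \<Rightarrow> 'd rel \<Rightarrow> 'd \<Rightarrow> 'd \<Rightarrow> 'a set" where
  "interval_preimage k f d \<beta> \<gamma> = {\<alpha>\<in>Field k. f \<alpha> \<in> above d \<beta> \<inter> underS d \<gamma>}"

lemma is_ideal_on_downward_closed:
  assumes "is_ideal_on k I" and "A \<in> I" and "B \<subseteq> A"
  shows "B \<in> I"
  using assms unfolding is_ideal_on_def by blast

lemma is_ideal_on_empty:
  assumes "is_ideal_on k I" and "Field k \<noteq> {}"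
  shows "{} \<in> I"
  using assms unfolding is_ideal_on_def bounded_in_def by blast

lemma weakly_saturated_no_disjoint_positive_family:
  assumes "is_ideal_on k I" and "weakly_saturated k t I" and "i0 \<in> Field t"
    and "\<forall>i\<in>Field t. A i \<subseteq> Field k"
    and disjoint: "\<forall>i\<in>Field t. \<forall>j\<in>Field t. i \<noteq> j \<longrightarrow> A i \<inter> A j = {}"
    and "\<forall>i\<in>Field t. A i \<notin> I"
  shows False
proof -
  \<comment> \<open>The part of \<kappa> not covered by the family is absorbed into the member at index i0.\<close>
  define P where "P i = (if i = i0 then Field k - (\<Union>j\<in>Field t - {i0}. A j) else A i)" for i
  have "A i \<subseteq> P i" if "i \<in> Field t" for i
    using that assms(3,4) disjoint unfolding P_def by (auto simp: disjoint_iff) blast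
  then have "\<forall>i\<in>Field t. P i \<notin> I"
    using assms(6) is_ideal_on_downward_closed[OF assms(1)] by blast
  moreover have "(\<Union>i\<in>Field t. P i) = Field k"
    using assms(3,4) unfolding P_def by auto
  moreover have "\<forall>i\<in>Field t. \<forall>j\<in>Field t. i \<noteq> j \<longrightarrow> P i \<inter> P j = {}"
    using disjoint unfolding P_def by auto
  ultimately show False using assms(2) unfolding weakly_saturated_def by blast
qed

lemma indecomposable_bounded_part_notin:
  assumes "is_ideal_on k I" and "indecomposable k t I"
    and "Linear_order d" and "has_cofinality d t"
    and "A \<subseteq> Field k" and "A \<notin> I" and "A \<noteq> {}" and "\<forall>\<alpha>\<in>A. f \<alpha> \<in> Field d"
  shows "\<exists>x\<in>Field d. {\<alpha>\<in>A. f \<alpha> \<in> underS d x} \<notin> I"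
proof -
  obtain C where C: "cofinal_in C d" "|C| =o |Field t|"
    using assms(4) unfolding has_cofinality_def by blast
  have "C \<noteq> {}" using C(1) assms(7,8) unfolding cofinal_in_def by blast
  moreover have "|C| \<le>o |Field t|" using C(2) ordIso_iff_ordLeq by blast
  ultimately obtain h where h: "h ` Field t = C" using card_of_ordLeq2 by metis
  define B where "B i = {\<alpha>\<in>A. (f \<alpha>, h i) \<in> d}" for i
  have "A \<subseteq> (\<Union>i\<in>Field t. B i)"
  proof
    fix \<alpha> assume "\<alpha> \<in> A"
    then obtain y where "y \<in> C" "(f \<alpha>, y) \<in> d" using C(1) assms(8) unfolding cofinal_in_def by blast
    then show "\<alpha> \<in> (\<Union>i\<in>Field t. B i)" using h \<open>\<alpha> \<in> A\<close> unfolding B_def by blast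
  qed
  moreover have "(\<Union>i\<in>Field t. B i) \<subseteq> A" unfolding B_def by blast
  ultimately have "(\<Union>i\<in>Field t. B i) = A" by (rule subset_antisym[rotated])
  then have "(\<Union>i\<in>Field t. B i) \<notin> I" using assms(6) by simp
  moreover have "\<forall>i\<in>Field t. B i \<subseteq> Field k" using assms(5) unfolding B_def by blast
  ultimately obtain w where w: "w \<subseteq> Field t" "|w| <o |Field t|" "(\<Union>i\<in>w. B i) \<notin> I"
    using assms(2) unfolding indecomposable_def by (metis (no_types))
  have "h ` w \<subseteq> Field d" using h w(1) C(1) unfolding cofinal_in_def by blast
  moreover have "|h ` w| <o |Field t|" using ordLeq_ordLess_trans[OF card_of_image w(2)] .
  ultimately obtain x where x: "x \<in> AboveS d (h ` w)"
    using has_cofinality_small_AboveS_nonempty[OF assms(3,4)] by blast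
  have "(\<Union>i\<in>w. B i) \<subseteq> {\<alpha>\<in>A. f \<alpha> \<in> underS d x}"
  proof
    fix \<alpha> assume "\<alpha> \<in> (\<Union>i\<in>w. B i)"
    then obtain i where "i \<in> w" "\<alpha> \<in> A" "(f \<alpha>, h i) \<in> d" unfolding B_def by blast
    moreover have "(h i, x) \<in> d" "h i \<noteq> x" using x \<open>i \<in> w\<close> unfolding AboveS_def by auto
    moreover note Partial_order_le_less_trans[OF _ \<open>(f \<alpha>, h i) \<in> d\<close> \<open>(h i, x) \<in> d\<close> \<open>h i \<noteq> x\<close>]
    ultimately show "\<alpha> \<in> {\<alpha>\<in>A. f \<alpha> \<in> underS d x}"
      using assms(3) unfolding underS_def linear_order_on_def by blast
  qed
  then have "{\<alpha>\<in>A. f \<alpha> \<in> underS d x} \<notin> I"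
    using w(3) is_ideal_on_downward_closed[OF assms(1)] by blast
  then show ?thesis using x unfolding AboveS_def by blast
qed

lemma positive_tail_positive_interval:
  assumes "is_ideal_on k I" and "{} \<in> I" and "indecomposable k t I"
    and "Linear_order d" and "has_cofinality d t" and "\<forall>\<alpha>\<in>Field k. f \<alpha> \<in> Field d"
    and "\<beta> \<in> Field d" and "{\<alpha>\<in>Field k. f \<alpha> \<in> above d \<beta>} \<notin> I"
  shows "\<exists>\<gamma>\<in>Field d. (\<beta>, \<gamma>) \<in> d \<and> interval_preimage k f d \<beta> \<gamma> \<notin> I"
proof -
  define T where "T = {\<alpha>\<in>Field k. f \<alpha> \<in> above d \<beta>}"
  have T: "T \<subseteq> Field k" "T \<notin> I" "\<forall>\<alpha>\<in>T. f \<alpha> \<in> Field d"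
    using assms(6,8) unfolding T_def by auto
  moreover from T(2) have "T \<noteq> {}" using assms(2) by force
  ultimately obtain \<gamma> where "\<gamma> \<in> Field d" "{\<alpha>\<in>T. f \<alpha> \<in> underS d \<gamma>} \<notin> I"
    using indecomposable_bounded_part_notin[OF assms(1,3,4,5)] by blast
  moreover have "{\<alpha>\<in>T. f \<alpha> \<in> underS d \<gamma>} = interval_preimage k f d \<beta> \<gamma>"
    unfolding T_def interval_preimage_def by blast
  moreover have "(\<beta>, \<gamma>) \<in> d"
  proof -
    have "interval_preimage k f d \<beta> \<gamma> \<noteq> {}" using calculation assms(2) by force
    then obtain \<alpha> where "(\<beta>, f \<alpha>) \<in> d" "(f \<alpha>, \<gamma>) \<in> d"
      unfolding interval_preimage_def above_def underS_def by blast
    then show ?thesis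
      using assms(4) unfolding linear_order_on_def partial_order_on_def preorder_on_def
      by (blast dest: transD)
  qed
  ultimately show ?thesis by auto
qed

lemma weakly_saturated_no_large_spaced_positive_intervals:
  assumes "is_ideal_on k I" and "weakly_saturated k t I" and "Field t \<noteq> {}"
    and "Linear_order d" and "spaced_by d g S" and "|Field t| \<le>o |S|"
    and positive: "\<forall>\<beta>\<in>S. interval_preimage k f d \<beta> (g \<beta>) \<notin> I"
  shows False
proof -
  obtain i0 where i0: "i0 \<in> Field t" using assms(3) by blast
  obtain e where e: "inj_on e (Field t)" "e ` Field t \<subseteq> S"
    using assms(6)[folded card_of_ordLeq] by blast
  have sub: "\<forall>i\<in>Field t. interval_preimage k f d (e i) (g (e i)) \<subseteq> Field k"
    unfolding interval_preimage_def by blast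
  have pos: "\<forall>i\<in>Field t. interval_preimage k f d (e i) (g (e i)) \<notin> I"
    using positive e(2) by blast
  have disj: "\<forall>i\<in>Field t. \<forall>j\<in>Field t. i \<noteq> j \<longrightarrow>
      interval_preimage k f d (e i) (g (e i)) \<inter> interval_preimage k f d (e j) (g (e j)) = {}"
  proof (intro ballI impI)
    fix i j assume "i \<in> Field t" "j \<in> Field t" "i \<noteq> j"
    then have "e i \<in> S" "e j \<in> S" "e i \<noteq> e j" using e by (auto simp: inj_on_eq_iff)
    then show "interval_preimage k f d (e i) (g (e i)) \<inter> interval_preimage k f d (e j) (g (e j)) = {}"
      using spaced_by_intervals_disjoint[OF assms(4,5), of "e i" "e j"]
      unfolding interval_preimage_def by auto
  qed
  show False
    using weakly_saturated_no_disjoint_positive_family[OF assms(1,2) i0 sub disj pos] .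
qed

theorem corollary2p3:
  fixes k :: "'a rel" and t :: "'c rel" and d :: "'d rel"
    and I :: "'a set set" and f :: "'a \<Rightarrow> 'd"
  assumes "Card_order k"
    and "Card_order t" and "infinite (Field t)" and "regularCard t"
    and "|Field t| <o |Field k|"
    and "is_ideal_on k I"
    and "weakly_saturated k t I"
    and "indecomposable k t I"
    and "Well_order d" and "has_cofinality d t"
    and "\<forall>\<alpha>\<in>Field k. f \<alpha> \<in> Field d"
  shows "\<exists>\<beta>\<in>Field d. {\<alpha>\<in>Field k. (\<beta>, f \<alpha>) \<in> d} \<in> I"
proof (rule ccontr)
  assume "\<not> ?thesis"
  then have tails: "\<forall>\<beta>\<in>Field d. {\<alpha>\<in>Field k. f \<alpha> \<in> above d \<beta>} \<notin> I"
    unfolding above_def by simp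
  have lin: "Linear_order d" using assms(9) unfolding well_order_on_def by blast
  have "Field k \<noteq> {}" using assms(5) card_of_empty not_ordLess_ordLeq by fastforce
  then have "{} \<in> I" using is_ideal_on_empty assms(6) by blast
  then have "\<forall>\<beta>\<in>Field d. \<exists>\<gamma>\<in>Field d. (\<beta>, \<gamma>) \<in> d \<and> interval_preimage k f d \<beta> \<gamma> \<notin> I"
    using positive_tail_positive_interval[OF assms(6) _ assms(8) lin assms(10,11)] tails by blast
  then obtain g where g: "\<forall>\<beta>\<in>Field d. (\<beta>, g \<beta>) \<in> d \<and> interval_preimage k f d \<beta> (g \<beta>) \<notin> I"
    by metis
  have "\<forall>B \<subseteq> Field d. |B| <o |Field t| \<longrightarrow> AboveS d B \<noteq> {}"
    using has_cofinality_small_AboveS_nonempty[OF lin assms(10)] by blast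
  then obtain S where S: "spaced_by d g S" "|Field t| \<le>o |S|"
    using exists_large_spaced_by[OF lin] g by blast
  moreover have "Field t \<noteq> {}" using assms(3) by auto
  ultimately show False
    using weakly_saturated_no_large_spaced_positive_intervals[OF assms(6,7) _ lin] g
    unfolding spaced_by_def by blast
qed

end
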